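(* Let $p>0$ and let $X$ be a non-negative random variable which is $u^{1-p}$-insensitive, i.e. $\mathbb{P}(X>u\pm u^{1-p})\sim\mathbb{P}(X>u)$ as $u\to\infty$. Then for every constant $B>0$, $$\lim_{u\to\infty}\frac{\exp(-Bu^{p})}{\mathbb{P}(X>u)}=0.$$
   Context: $a_1(u)\sim a_2(u)$ means $a_1(u)/a_2(u)\to1$ as $u\to\infty$. *)

theory Defs
  imports "HOL-Probability.Probability"
begin

end

theory Submission
  imports Defs "HOL-Real_Asymp.Real_Asymp"
begin

text \<open>Write \<open>F u = P(X > u)\<close> and fix \<open>q < 1\<close>.
  Eventually \<open>F (u + u\<^bsup>1-p\<^esup>) \<ge> q F u\<close>, and along the orbit of \<open>v \<mapsto> v + v\<^bsup>1-p\<^esup>\<close> the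
  quantity \<open>v\<^sup>p\<close> grows by at least \<open>p/2\<close> per step. So \<open>F\<close> loses at most a factor \<open>q\<close>
  each time \<open>u\<^sup>p\<close> advances by \<open>p/2\<close>, i.e. \<open>F u \<ge> K exp (-c u\<^sup>p)\<close> with \<open>c = 2 ln(1/q) / p\<close>,
  and choosing \<open>q\<close> close to \<open>1\<close> makes \<open>c\<close> smaller than any given \<open>B\<close>.\<close>

lemma powr_add_powr_one_minus_ge:
  fixes v p :: real
  assumes "1 \<le> v" "0 < p"
  shows "v powr p + p / 2 \<le> (v + v powr (1 - p)) powr p"
proof -
  define t where "t = v powr (- p)"
  have t_pos: "0 < t" using assms by (simp add: t_def)
  have "1 \<le> v powr p" using assms by (intro ge_one_powr_ge_zero) auto
  hence t_le_1: "t \<le> 1" using assms by (simp add: t_def powr_minus inverse_le_1_iff)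
  have vt: "v powr p * t = 1" using assms by (simp add: t_def powr_minus)
  have "v powr (1 - p) = v * t" using assms by (simp add: t_def powr_diff powr_minus divide_inverse)
  hence factor: "v + v powr (1 - p) = v * (1 + t)" by (simp add: algebra_simps)
  have "t / 2 \<le> t / (1 + t)" using t_pos t_le_1 by (intro divide_left_mono) auto
  also have "t / (1 + t) \<le> ln (1 + t)"
  proof -
    have "ln (1 / (1 + t)) \<le> 1 / (1 + t) - 1" using t_pos by (intro ln_le_minus_one) auto
    thus ?thesis using t_pos by (simp add: ln_div field_simps)
  qed
  finally have ln_ge: "t / 2 \<le> ln (1 + t)" .
  have "1 + p * (t / 2) \<le> 1 + p * ln (1 + t)" using ln_ge assms(2) by simp
  also have "\<dots> \<le> exp (p * ln (1 + t))" by (rule exp_ge_add_one_self)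
  also have "\<dots> = (1 + t) powr p" using t_pos by (simp add: powr_def)
  finally have "v powr p * (1 + p * (t / 2)) \<le> v powr p * (1 + t) powr p"
    by (intro mult_left_mono) auto
  also have "\<dots> = (v + v powr (1 - p)) powr p"
    using factor assms t_pos by (simp add: powr_mult)
  finally show ?thesis using vt by (simp add: algebra_simps)
qed

lemma funpow_add_powr_one_minus_ge:
  fixes u0 p :: real
  assumes "1 \<le> u0" "0 < p"
  shows "u0 \<le> ((\<lambda>v. v + v powr (1 - p)) ^^ n) u0"
    and "real n * p / 2 \<le> (((\<lambda>v. v + v powr (1 - p)) ^^ n) u0) powr p"
proof -
  let ?s = "\<lambda>n. ((\<lambda>v. v + v powr (1 - p)) ^^ n) u0"
  show s_ge: "u0 \<le> ?s n" for n
    by (induction n) (simp_all add: add_increasing2)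
  show "real n * p / 2 \<le> ?s n powr p"
  proof (induction n)
    case (Suc n)
    have "?s n powr p + p / 2 \<le> ?s (Suc n) powr p"
      using powr_add_powr_one_minus_ge[of "?s n" p] s_ge[of n] assms by simp
    thus ?case using Suc by (simp add: algebra_simps)
  qed simp
qed

lemma antimono_lower_bound_from_step:
  fixes F :: "real \<Rightarrow> real" and p q u0 u :: real
  assumes "antimono F" "0 < p" "0 < q" "q \<le> 1" "1 \<le> u0" "0 \<le> F u0"
    and step: "\<And>u. u0 \<le> u \<Longrightarrow> q * F u \<le> F (u + u powr (1 - p))"
    and "u0 \<le> u"
  shows "q * F u0 * q powr (2 / p * u powr p) \<le> F u"
proof -
  define s where "s n = ((\<lambda>v. v + v powr (1 - p)) ^^ n) u0" for n
  have s_ge: "u0 \<le> s n" and s_powr: "real n * p / 2 \<le> s n powr p" for n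
    using funpow_add_powr_one_minus_ge[OF assms(5,2)] by (simp_all add: s_def)
  have orbit: "q ^ n * F u0 \<le> F u" if "u0 \<le> u" "u \<le> s n" for n u
    using that
  proof (induction n arbitrary: u)
    case 0
    thus ?case by (simp add: s_def)
  next
    case (Suc n)
    show ?case
    proof (cases "u \<le> s n")
      case True
      have "q ^ Suc n * F u0 \<le> q ^ n * F u0"
        using assms(3,4,6) by (intro mult_right_mono power_decreasing) auto
      thus ?thesis using Suc.IH[OF Suc.prems(1) True] by linarith
    next
      case False
      have "q ^ Suc n * F u0 \<le> q * F (s n)"
        using Suc.IH[of "s n"] s_ge assms(3) by (simp add: mult_left_mono)
      also have "\<dots> \<le> F (s (Suc n))" using step[OF s_ge] by (simp add: s_def)
      also have "\<dots> \<le> F u" using Suc.prems(2) \<open>antimono F\<close> by (simp add: antimonoD)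
      finally show ?thesis .
    qed
  qed
  define x where "x = 2 / p * u powr p"
  define n where "n = nat \<lceil>x\<rceil>"
  have "0 \<le> x" using assms(2) by (simp add: x_def)
  hence x_le_n: "x \<le> real n" and n_le: "real n \<le> x + 1"
    unfolding n_def by linarith+
  have "u powr p \<le> s n powr p"
    using x_le_n s_powr[of n] assms(2) by (simp add: x_def field_simps)
  hence "u \<le> s n"
    using s_ge[of n] assms(2,5) powr_less_mono2[of p "s n" u] by fastforce
  hence "q ^ n * F u0 \<le> F u" using orbit assms(8) by blast
  moreover have "q * q powr x \<le> q ^ n"
  proof -
    have "q * q powr x = q powr (x + 1)" using assms(3) by (simp add: powr_add)
    also have "\<dots> \<le> q powr real n" using n_le assms(3,4) by (intro powr_mono') auto
    finally show ?thesis using assms(3) by (simp add: powr_realpow)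
  qed
  ultimately show ?thesis
    using assms(6) mult_right_mono[of "q * q powr x" "q ^ n" "F u0"]
    by (simp add: x_def algebra_simps)
qed

lemma exp_powr_over_tendsto_zero:
  fixes F :: "real \<Rightarrow> real" and p B C K :: real
  assumes "0 < p" "C < B" "0 < K"
    and lower: "\<forall>\<^sub>F u in at_top. K * exp (- C * u powr p) \<le> F u"
  shows "((\<lambda>u. exp (- B * u powr p) / F u) \<longlongrightarrow> 0) at_top"
proof -
  define D where "D = B - C"
  have "D > 0" using assms(2) by (simp add: D_def)
  hence lim: "((\<lambda>u. exp (- D * u powr p) / K) \<longlongrightarrow> 0) at_top"
    using assms(1,3) by real_asymp
  have upper: "\<forall>\<^sub>F u in at_top. exp (- B * u powr p) / F u \<le> exp (- D * u powr p) / K"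
    using lower
  proof eventually_elim
    case (elim u)
    have "0 < K * exp (- C * u powr p)" using assms(3) by simp
    hence "exp (- B * u powr p) / F u \<le> exp (- B * u powr p) / (K * exp (- C * u powr p))"
      using elim by (intro divide_left_mono) auto
    also have "\<dots> = exp (- D * u powr p) / K"
    proof -
      have "exp (- B * u powr p) = exp (- D * u powr p) * exp (- C * u powr p)"
        by (simp add: D_def algebra_simps flip: exp_add)
      thus ?thesis using assms(3) by simp
    qed
    finally show ?case .
  qed
  have nonneg: "\<forall>\<^sub>F u in at_top. 0 \<le> exp (- B * u powr p) / F u"
    using lower
  proof eventually_elim
    case (elim u)
    have "0 < K * exp (- C * u powr p)" using assms(3) by simp
    thus ?case using elim by simp
  qed
  show ?thesis by (rule tendsto_sandwich[OF nonneg upper tendsto_const lim])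
qed

lemma (in finite_measure) antimono_measure_greater:
  fixes X :: "'a \<Rightarrow> real"
  assumes "X \<in> borel_measurable M"
  shows "antimono (\<lambda>u. measure M {x \<in> space M. X x > u})"
proof (rule antimonoI)
  fix u v :: real
  assume "u \<le> v"
  have "{x \<in> space M. X x > u} \<in> sets M" using assms by measurable
  thus "measure M {x \<in> space M. X x > v} \<le> measure M {x \<in> space M. X x > u}"
    using \<open>u \<le> v\<close> by (intro finite_measure_mono) auto
qed

theorem lemma5p1:
  fixes M :: "'a measure" and X :: "'a \<Rightarrow> real" and p B :: real
  assumes "prob_space M"
    and "X \<in> borel_measurable M"
    and "AE x in M. X x \<ge> 0"
    and "p > 0"
    and "((\<lambda>u. measure M {x \<in> space M. X x > u + u powr (1 - p)}
                / measure M {x \<in> space M. X x > u}) \<longlongrightarrow> 1) at_top"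
    and "((\<lambda>u. measure M {x \<in> space M. X x > u - u powr (1 - p)}
                / measure M {x \<in> space M. X x > u}) \<longlongrightarrow> 1) at_top"
    and "B > 0"
  shows "((\<lambda>u. exp (- B * u powr p) / measure M {x \<in> space M. X x > u}) \<longlongrightarrow> 0) at_top"
proof -
  interpret prob_space M by fact
  define F where "F u = measure M {x \<in> space M. X x > u}" for u
  have "antimono F"
    unfolding F_def using assms(2) by (rule antimono_measure_greater)
  define q where "q = exp (- B * p / 4)"
  have q: "0 < q" "q < 1" using assms(4,7) by (auto simp: q_def)
  have "\<forall>\<^sub>F u in at_top. q < F (u + u powr (1 - p)) / F u \<and> 1 \<le> u"
    using order_tendstoD(1)[OF assms(5) q(2)] eventually_ge_at_top[of 1]
    by eventually_elim (simp add: F_def)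
  then obtain u0 where u0: "\<And>u. u0 \<le> u \<Longrightarrow> q < F (u + u powr (1 - p)) / F u \<and> 1 \<le> u"
    by (auto simp: eventually_at_top_linorder)
  \<comment> \<open>the ratio exceeds \<open>q > 0\<close>, so the denominator cannot be the junk value \<open>0\<close>\<close>
  have F_pos: "0 < F u" and step: "q * F u \<le> F (u + u powr (1 - p))" if "u0 \<le> u" for u
  proof -
    have ratio: "q < F (u + u powr (1 - p)) / F u" using u0[OF that] by blast
    have "F u \<noteq> 0" using ratio q(1) by auto
    thus "0 < F u" by (simp add: F_def order_less_le)
    thus "q * F u \<le> F (u + u powr (1 - p))" using ratio by (simp add: field_simps)
  qed
  have q_powr: "q powr (2 / p * u powr p) = exp (- (B / 2) * u powr p)" for u
    using assms(4) by (simp add: q_def powr_def field_simps)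
  have "1 \<le> u0" and "0 < F u0" using u0[of u0] F_pos[of u0] by simp_all
  have "q * F u0 * exp (- (B / 2) * u powr p) \<le> F u" if "u0 \<le> u" for u
    unfolding q_powr[symmetric]
    using step that
    by (rule antimono_lower_bound_from_step[OF \<open>antimono F\<close> assms(4) q(1) less_imp_le[OF q(2)]
          \<open>1 \<le> u0\<close> less_imp_le[OF \<open>0 < F u0\<close>]])
  hence "\<forall>\<^sub>F u in at_top. q * F u0 * exp (- (B / 2) * u powr p) \<le> F u"
    by (auto simp: eventually_at_top_linorder)
  from exp_powr_over_tendsto_zero[OF assms(4) _ _ this]
  show ?thesis using assms(7) q(1) \<open>0 < F u0\<close> by (simp add: F_def)
qed

end
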